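(* Let $\lambda_1,\lambda_2$ be two distinct lines in $\mathbb{R}^2$ given by $\Lambda_i=0$, where $\Lambda_i=\alpha_i x+\beta_i y+\gamma_i$ with real coefficients and with $\alpha_i\neq0$ and $\beta_i\neq0$ for $i=1,2$. Then the bivariate cubic polynomial $f(x,y)=xy\Lambda_1+\Lambda_2$ is irreducible. *)

theory Defs
  imports "HOL-Computational_Algebra.Polynomial_Factorial"
begin

text \<open>Bivariate real polynomials R[x,y] are represented as R[x][y], i.e. the type
  real poly poly: polynomials in y whose coefficients are polynomials in x.\<close>

definition var_x :: "real poly poly" where
  "var_x = [:[:0, 1:]:]"

definition var_y :: "real poly poly" where
  "var_y = [:0, 1:]"

definition lin_form :: "real \<Rightarrow> real \<Rightarrow> real \<Rightarrow> real poly poly" where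
  "lin_form a b c = [:[:c:]:] + [:[:a:]:] * var_x + [:[:b:]:] * var_y"

definition line_set :: "real \<Rightarrow> real \<Rightarrow> real \<Rightarrow> (real \<times> real) set" where
  "line_set a b c = {(x, y). a * x + b * y + c = 0}"

end

theory Submission
  imports Defs
begin

text \<open>View f as a quadratic in y over \<real>[x]: its coefficients are \<alpha>2 x + \<gamma>2, \<alpha>1 x^2 + \<gamma>1 x + \<beta>2
  and \<beta>1 x. A factor of degree 0 in y divides both \<beta>1 x and a polynomial with constant term
  \<beta>2 \<noteq> 0, so it is a unit. In a factorization into two factors of degree 1 in y, one leading
  coefficient is a constant since their product is \<beta>1 x; comparing the remaining coefficients
  then forces \<Lambda>1 = (\<beta>1/\<beta>2) \<Lambda>2, i.e. the two lines coincide.\<close>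

lemma xy_lin_form_plus_lin_form_eq:
  "var_x * var_y * lin_form a1 b1 c1 + lin_form a2 b2 c2 = [:[:c2, a2:], [:b2, c1, a1:], [:0, b1:]:]"
  by (simp add: var_x_def var_y_def lin_form_def)

lemma line_set_scale:
  assumes "t \<noteq> 0"
  shows "line_set (t * a) (t * b) (t * c) = line_set a b c"
proof -
  have "t * a * x + t * b * y + t * c = t * (a * x + b * y + c)" for x y
    by (simp add: algebra_simps)
  then show ?thesis
    using assms by (auto simp: line_set_def)
qed

lemma common_divisor_of_X_and_nonroot_is_unit:
  fixes g c :: "'a::field poly"
  assumes "g dvd [:0, b:]" "b \<noteq> 0" "g dvd c" "poly c 0 \<noteq> 0"
  shows "is_unit g"
proof -
  obtain u where u: "[:0, b:] = g * u"
    using assms(1) by blast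
  have "g \<noteq> 0" "u \<noteq> 0"
    using u assms(2) by auto
  then have deg: "degree g + degree u = 1"
    using u[symmetric] degree_mult_eq[of g u] assms(2) by simp
  show ?thesis
  proof (cases "degree g = 0")
    case True
    then show ?thesis
      using \<open>g \<noteq> 0\<close> by (metis degree0_coeffs is_unit_triv pCons_eq_0_iff)
  next
    case False
    with deg have "degree u = 0"
      by simp
    then obtain u0 where "u = [:u0:]"
      using degree0_coeffs by blast
    with \<open>u \<noteq> 0\<close> have "poly u 0 \<noteq> 0"
      by simp
    moreover have "poly g 0 * poly u 0 = 0"
      using arg_cong[OF u, of "\<lambda>p. poly p 0"] by simp
    ultimately have "poly g 0 = 0"
      by simp
    moreover obtain w where "c = g * w"
      using assms(3) by blast
    ultimately have "poly c 0 = 0"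
      by simp
    with assms(4) show ?thesis
      by contradiction
  qed
qed

lemma const_factor_is_unit:
  fixes g h :: "'a::field poly poly"
  assumes "[:c0, c1, [:0, b:]:] = g * h" "degree g = 0" "b \<noteq> 0" "poly c1 0 \<noteq> 0"
  shows "is_unit g"
proof -
  obtain g0 where g: "g = [:g0:]"
    using assms(2) degree0_coeffs by blast
  have "coeff [:c0, c1, [:0, b:]:] n = g0 * coeff h n" for n
    using assms(1) g by simp
  from this[of 2] this[of 1] have "g0 dvd [:0, b:]" "g0 dvd c1"
    by (simp_all add: numeral_2_eq_2)
  then have "is_unit g0"
    using common_divisor_of_X_and_nonroot_is_unit assms(3,4) by blast
  then show ?thesis
    using g is_unit_const_poly_iff by blast
qed

lemma linear_factorization_coeffs_proportional_const:
  fixes p q r s :: "'a::field poly"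
  assumes pr: "p * r = [:0, b1:]" and qs: "q * s = [:c2, a2:]"
    and mid: "p * s + q * r = [:b2, c1, a1:]" and deg_p: "degree p = 0"
    and "a1 \<noteq> 0" "a2 \<noteq> 0" "b1 \<noteq> 0" "b2 \<noteq> 0"
  shows "\<exists>t. t \<noteq> 0 \<and> a1 = t * a2 \<and> b1 = t * b2 \<and> c1 = t * c2"
proof -
  from deg_p obtain k where p: "p = [:k:]"
    using degree0_coeffs by blast
  have "k \<noteq> 0"
    using pr p \<open>b1 \<noteq> 0\<close> by auto
  have "r = smult (inverse k) (p * r)"
    using p \<open>k \<noteq> 0\<close> by simp
  then have r: "r = [:0, b1 / k:]"
    by (simp add: pr divide_inverse mult.commute)
  have "q \<noteq> 0" "s \<noteq> 0"
    using qs \<open>a2 \<noteq> 0\<close> by auto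
  then have deg_qs: "degree q + degree s = 1"
    using qs degree_mult_eq[of q s] \<open>a2 \<noteq> 0\<close> by simp
  have "degree s = 0"
  proof (rule ccontr)
    assume "degree s \<noteq> 0"
    with deg_qs have "degree q = 0"
      by simp
    then obtain m where "q = [:m:]"
      using degree0_coeffs by blast
    then have "degree (p * s + q * r) \<le> 1"
      using deg_qs p r by (auto intro: degree_add_le order.trans[OF degree_smult_le])
    with mid \<open>a1 \<noteq> 0\<close> show False
      by simp
  qed
  then obtain m where s: "s = [:m:]"
    using degree0_coeffs by blast
  have "m \<noteq> 0"
    using qs s \<open>a2 \<noteq> 0\<close> by auto
  have "q = smult (inverse m) (q * s)"
    using s \<open>m \<noteq> 0\<close> by simp
  then have q: "q = [:c2 / m, a2 / m:]"
    by (simp add: qs divide_inverse mult.commute)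
  have "[:b2, c1, a1:] = [:k * m, c2 * b1 / (m * k), a2 * b1 / (m * k):]"
    using mid[symmetric] unfolding p q r s by (simp add: algebra_simps)
  then have "b2 = k * m" "c1 = b1 * c2 / (k * m)" "a1 = b1 * a2 / (k * m)"
    by (simp_all add: mult.commute)
  then show ?thesis
    using \<open>b1 \<noteq> 0\<close> \<open>b2 \<noteq> 0\<close> by (intro exI[of _ "b1 / b2"]) (auto simp: field_simps)
qed

lemma linear_factorization_coeffs_proportional:
  fixes p q r s :: "'a::field poly"
  assumes pr: "p * r = [:0, b1:]" and qs: "q * s = [:c2, a2:]"
    and mid: "p * s + q * r = [:b2, c1, a1:]"
    and nz: "a1 \<noteq> 0" "a2 \<noteq> 0" "b1 \<noteq> 0" "b2 \<noteq> 0"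
  shows "\<exists>t. t \<noteq> 0 \<and> a1 = t * a2 \<and> b1 = t * b2 \<and> c1 = t * c2"
proof -
  have "p \<noteq> 0" "r \<noteq> 0"
    using pr \<open>b1 \<noteq> 0\<close> by auto
  then have "degree p + degree r = 1"
    using pr degree_mult_eq[of p r] \<open>b1 \<noteq> 0\<close> by simp
  then consider "degree p = 0" | "degree r = 0"
    by linarith
  then show ?thesis
  proof cases
    case 1
    then show ?thesis
      using linear_factorization_coeffs_proportional_const[OF pr qs mid _ nz] by blast
  next
    case 2
    have "r * p = [:0, b1:]" "s * q = [:c2, a2:]" "r * q + s * p = [:b2, c1, a1:]"
      using pr qs mid by (simp_all add: mult.commute add.commute)
    then show ?thesis
      using linear_factorization_coeffs_proportional_const[OF _ _ _ 2 nz] by blast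
  qed
qed

theorem lemma2:
  fixes \<alpha>1 \<beta>1 \<gamma>1 \<alpha>2 \<beta>2 \<gamma>2 :: real
  assumes "\<alpha>1 \<noteq> 0" "\<beta>1 \<noteq> 0" "\<alpha>2 \<noteq> 0" "\<beta>2 \<noteq> 0"
    and "line_set \<alpha>1 \<beta>1 \<gamma>1 \<noteq> line_set \<alpha>2 \<beta>2 \<gamma>2"
  shows "irreducible (var_x * var_y * lin_form \<alpha>1 \<beta>1 \<gamma>1 + lin_form \<alpha>2 \<beta>2 \<gamma>2)"
  unfolding xy_lin_form_plus_lin_form_eq
proof (rule irreducibleI)
  let ?F = "[:[:\<gamma>2, \<alpha>2:], [:\<beta>2, \<gamma>1, \<alpha>1:], [:0, \<beta>1:]:]"
  show "?F \<noteq> 0" "\<not> is_unit ?F"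
    using \<open>\<beta>1 \<noteq> 0\<close> by (auto simp: is_unit_poly_iff)
  fix g h
  assume gh: "?F = g * h"
  have "g \<noteq> 0" "h \<noteq> 0"
    using gh \<open>\<beta>1 \<noteq> 0\<close> by auto
  then have deg: "degree g + degree h = 2"
    using gh[symmetric] degree_mult_eq[of g h] \<open>\<beta>1 \<noteq> 0\<close> by simp
  have "degree g \<noteq> 0 \<and> degree h \<noteq> 0 \<Longrightarrow> False"
  proof -
    assume "degree g \<noteq> 0 \<and> degree h \<noteq> 0"
    with deg have "degree g = 1" "degree h = 1"
      by linarith+
    then obtain p q r s where "g = [:q, p:]" "h = [:s, r:]"
      by (metis degree1_coeffs)
    with gh have "p * r = [:0, \<beta>1:]" "q * s = [:\<gamma>2, \<alpha>2:]" "p * s + q * r = [:\<beta>2, \<gamma>1, \<alpha>1:]"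
      by (simp_all add: algebra_simps)
    then obtain t where "t \<noteq> 0" "\<alpha>1 = t * \<alpha>2" "\<beta>1 = t * \<beta>2" "\<gamma>1 = t * \<gamma>2"
      using linear_factorization_coeffs_proportional assms(1-4) by metis
    with assms(5) line_set_scale show False
      by simp
  qed
  moreover have "poly [:\<beta>2, \<gamma>1, \<alpha>1:] 0 \<noteq> 0"
    using \<open>\<beta>2 \<noteq> 0\<close> by simp
  moreover have "?F = h * g"
    using gh by (simp add: mult.commute)
  ultimately show "is_unit g \<or> is_unit h"
    using const_factor_is_unit \<open>\<beta>1 \<noteq> 0\<close> gh by blast
qed

end
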